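(* Let $P$ be a 6-stack and let $Q$ be a retract of $P$ that is a 4-tower. Then $P(0)\cap Q(0)\neq\emptyset$, where $Q(0)$ is the set of minimal elements of $Q$.
   Context: All posets are finite. For a poset $P$ and $p\in P$, the rank $r(p)$ of $p$ is the largest $m$ such that there is a chain $p_0<\dots<p_m=p$ in $P$. $P$ is ranked of rank $r(P)$ if every maximal chain has exactly $r(P)+1$ elements. For $0\le i\le j$, $P(i,j)=\{p\in P:i\le r(p)\le j\}$, $P(i)=P(i,i)$ (induced order). A subset $Q\subseteq P$ (induced order) is a retract of $P$ if there is an order-preserving $f:P\to Q$ with $f(q)=q$ for all $q\in Q$. The 6-crown $C_6$ is the poset on $\{x_0,x_1,x_2,y_0,y_1,y_2\}$ whose only strict comparabilities are $x_0<y_0>x_1<y_1>x_2<y_2>x_0$. A 6-stack is a ranked poset $P$ of rank $n\ge1$ such that $P(i,i+1)\cong C_6$ for each $0\le i<n$. The ordinal sum of posets $P_1,\dots,P_k$ ($k\ge1$) is their disjoint union ordered by the orders of the $P_i$ together with $p<q$ whenever $p\in P_i,q\in P_j,i<j$. A 4-tower is an ordinal sum of one or more two-element antichains. *)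

theory Defs
  imports Main
begin

text \<open>A finite poset is given by a carrier set P and a relation le, which is a
partial order on P. Subsets carry the induced order (same relation le).\<close>

definition poset_on :: "'a set \<Rightarrow> ('a \<Rightarrow> 'a \<Rightarrow> bool) \<Rightarrow> bool" where
  "poset_on P le \<longleftrightarrow> finite P \<and>
     (\<forall>x\<in>P. le x x) \<and>
     (\<forall>x\<in>P. \<forall>y\<in>P. le x y \<and> le y x \<longrightarrow> x = y) \<and>
     (\<forall>x\<in>P. \<forall>y\<in>P. \<forall>z\<in>P. le x y \<and> le y z \<longrightarrow> le x z)"

definition chain_to :: "'a set \<Rightarrow> ('a \<Rightarrow> 'a \<Rightarrow> bool) \<Rightarrow> 'a \<Rightarrow> nat \<Rightarrow> bool" where
  "chain_to P le p m \<longleftrightarrow> (\<exists>c :: nat \<Rightarrow> 'a.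
     (\<forall>i\<le>m. c i \<in> P) \<and> (\<forall>i<m. le (c i) (c (Suc i)) \<and> c i \<noteq> c (Suc i)) \<and> c m = p)"

definition rank :: "'a set \<Rightarrow> ('a \<Rightarrow> 'a \<Rightarrow> bool) \<Rightarrow> 'a \<Rightarrow> nat" where
  "rank P le p = (GREATEST m. chain_to P le p m)"

definition levels :: "'a set \<Rightarrow> ('a \<Rightarrow> 'a \<Rightarrow> bool) \<Rightarrow> nat \<Rightarrow> nat \<Rightarrow> 'a set" where
  "levels P le i j = {p \<in> P. i \<le> rank P le p \<and> rank P le p \<le> j}"

abbreviation level :: "'a set \<Rightarrow> ('a \<Rightarrow> 'a \<Rightarrow> bool) \<Rightarrow> nat \<Rightarrow> 'a set" where
  "level P le i \<equiv> levels P le i i"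

definition is_chain :: "'a set \<Rightarrow> ('a \<Rightarrow> 'a \<Rightarrow> bool) \<Rightarrow> 'a set \<Rightarrow> bool" where
  "is_chain P le C \<longleftrightarrow> C \<subseteq> P \<and> (\<forall>x\<in>C. \<forall>y\<in>C. le x y \<or> le y x)"

definition maximal_chain :: "'a set \<Rightarrow> ('a \<Rightarrow> 'a \<Rightarrow> bool) \<Rightarrow> 'a set \<Rightarrow> bool" where
  "maximal_chain P le C \<longleftrightarrow> is_chain P le C \<and> (\<forall>D. is_chain P le D \<and> C \<subseteq> D \<longrightarrow> D = C)"

definition ranked :: "'a set \<Rightarrow> ('a \<Rightarrow> 'a \<Rightarrow> bool) \<Rightarrow> nat \<Rightarrow> bool" where
  "ranked P le n \<longleftrightarrow> (\<forall>C. maximal_chain P le C \<longrightarrow> card C = Suc n)"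

text \<open>The 6-crown on {0..5}: x_i = i, y_i = 3+i (i = 0,1,2), with
  x0 < y0 > x1 < y1 > x2 < y2 > x0.\<close>
definition crown6_le :: "nat \<Rightarrow> nat \<Rightarrow> bool" where
  "crown6_le a b \<longleftrightarrow> a = b \<or>
     (a, b) \<in> {(0,3), (1,3), (1,4), (2,4), (2,5), (0,5)}"

definition crown6 :: "nat set" where
  "crown6 = {0..5}"

definition order_iso :: "'a set \<Rightarrow> ('a \<Rightarrow> 'a \<Rightarrow> bool) \<Rightarrow> 'b set \<Rightarrow> ('b \<Rightarrow> 'b \<Rightarrow> bool) \<Rightarrow> bool" where
  "order_iso A leA B leB \<longleftrightarrow> (\<exists>f. bij_betw f A B \<and>
     (\<forall>x\<in>A. \<forall>y\<in>A. leA x y \<longleftrightarrow> leB (f x) (f y)))"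

definition six_stack :: "'a set \<Rightarrow> ('a \<Rightarrow> 'a \<Rightarrow> bool) \<Rightarrow> bool" where
  "six_stack P le \<longleftrightarrow> poset_on P le \<and> (\<exists>n\<ge>1. ranked P le n \<and>
     (\<forall>i<n. order_iso (levels P le i (Suc i)) le crown6 crown6_le))"

definition retract :: "'a set \<Rightarrow> ('a \<Rightarrow> 'a \<Rightarrow> bool) \<Rightarrow> 'a set \<Rightarrow> bool" where
  "retract P le Q \<longleftrightarrow> Q \<subseteq> P \<and> (\<exists>f. (\<forall>p\<in>P. f p \<in> Q) \<and>
     (\<forall>p\<in>P. \<forall>p'\<in>P. le p p' \<longrightarrow> le (f p) (f p')) \<and> (\<forall>q\<in>Q. f q = q))"

text \<open>Q (induced order) is an ordinal sum A_0 \<oplus> ... \<oplus> A_(k-1) of k \<ge> 1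
  two-element antichains.\<close>
definition four_tower :: "'a set \<Rightarrow> ('a \<Rightarrow> 'a \<Rightarrow> bool) \<Rightarrow> bool" where
  "four_tower Q le \<longleftrightarrow> (\<exists>k\<ge>1. \<exists>A :: nat \<Rightarrow> 'a set.
     (\<forall>i<k. card (A i) = 2) \<and>
     (\<forall>i<k. \<forall>j<k. i \<noteq> j \<longrightarrow> A i \<inter> A j = {}) \<and>
     Q = (\<Union>i<k. A i) \<and>
     (\<forall>i<k. \<forall>j<k. \<forall>p\<in>A i. \<forall>q\<in>A j. le p q \<longleftrightarrow> (p = q \<or> i < j)))"

end

theory Submission
  imports Defs
begin

text \<open>Let \<open>a \<noteq> b\<close> be the two minimal elements of the 4-tower \<open>Q\<close> and \<open>f\<close> a retraction
  of \<open>P\<close> onto \<open>Q\<close>. Any \<open>x \<le> z\<close> with \<open>z\<close> minimal in \<open>Q\<close> is mapped to \<open>f x \<le> f z = z\<close>,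
  hence \<open>f x = z\<close>. If neither \<open>a\<close> nor \<open>b\<close> were minimal in \<open>P\<close>, each would lie above
  an element of rank 1, and therefore, as in the crown \<open>P(0,1)\<close> every upper element covers two
  of the three lower ones, above at least two of the three elements of \<open>P(0)\<close>.
  Then \<open>f\<close> would send two of these three elements to \<open>a\<close> and two to \<open>b\<close>, which is impossible.\<close>

lemma poset_on_refl: "poset_on P le \<Longrightarrow> x \<in> P \<Longrightarrow> le x x"
  unfolding poset_on_def by blast

lemma poset_on_antisym: "poset_on P le \<Longrightarrow> x \<in> P \<Longrightarrow> y \<in> P \<Longrightarrow> le x y \<Longrightarrow> le y x \<Longrightarrow> x = y"
  unfolding poset_on_def by blast

lemma poset_on_trans:
  "poset_on P le \<Longrightarrow> x \<in> P \<Longrightarrow> y \<in> P \<Longrightarrow> z \<in> P \<Longrightarrow> le x y \<Longrightarrow> le y z \<Longrightarrow> le x z"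
  unfolding poset_on_def by blast

lemma chain_to_le:
  assumes po: "poset_on P le"
    and c: "\<forall>i\<le>m. c i \<in> P" "\<forall>i<m. le (c i) (c (Suc i)) \<and> c i \<noteq> c (Suc i)"
    and "i \<le> j" "j \<le> m"
  shows "le (c i) (c j)"
  using \<open>i \<le> j\<close> \<open>j \<le> m\<close>
proof (induction j rule: dec_induct)
  case base
  then show ?case using poset_on_refl[OF po] c(1) by simp
next
  case (step n)
  have "c i \<in> P" "c n \<in> P" "c (Suc n) \<in> P" using c(1) step by auto
  moreover have "le (c i) (c n)" "le (c n) (c (Suc n))" using step c(2) by auto
  ultimately show ?case by (rule poset_on_trans[OF po])
qed

lemma chain_to_less_card:
  assumes po: "poset_on P le" and "chain_to P le p m"
  shows "m < card P"
proof -
  obtain c where c: "\<forall>i\<le>m. c i \<in> P" "\<forall>i<m. le (c i) (c (Suc i)) \<and> c i \<noteq> c (Suc i)"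
    using \<open>chain_to P le p m\<close> unfolding chain_to_def by blast
  have "inj_on c {..m}"
  proof (rule linorder_inj_onI')
    fix i j assume "i \<in> {..m}" "j \<in> {..m}" "i < j"
    then have "le (c i) (c (Suc i))" "le (c (Suc i)) (c j)" "c i \<noteq> c (Suc i)"
      using c chain_to_le[OF po c, of "Suc i" j] by auto
    moreover have "c i \<in> P" "c (Suc i) \<in> P" using c(1) \<open>i < j\<close> \<open>j \<in> {..m}\<close> by auto
    ultimately show "c i \<noteq> c j" using poset_on_antisym[OF po] by metis
  qed
  moreover have "c ` {..m} \<subseteq> P" using c(1) by auto
  moreover have "finite P" using po unfolding poset_on_def by simp
  ultimately have "card {..m} \<le> card P" by (metis card_image card_mono)
  then show ?thesis by simp
qed

lemma chain_to_0: "p \<in> P \<Longrightarrow> chain_to P le p 0"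
  unfolding chain_to_def by (rule exI[of _ "\<lambda>_. p"]) auto

lemma chain_to_rank:
  assumes "poset_on P le" and "p \<in> P"
  shows "chain_to P le p (rank P le p)"
  unfolding rank_def
proof (rule GreatestI_nat[where b = "card P"])
  show "chain_to P le p 0" using \<open>p \<in> P\<close> by (rule chain_to_0)
  show "n \<le> card P" if "chain_to P le p n" for n
    using chain_to_less_card[OF \<open>poset_on P le\<close> that] by simp
qed

lemma chain_to_le_rank:
  assumes "poset_on P le" and "chain_to P le p m"
  shows "m \<le> rank P le p"
  unfolding rank_def
proof (rule Greatest_le_nat[where b = "card P"])
  show "chain_to P le p m" by (rule assms(2))
  show "n \<le> card P" if "chain_to P le p n" for n
    using chain_to_less_card[OF \<open>poset_on P le\<close> that] by simp
qed

lemma rank_less: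
  assumes po: "poset_on P le" and "p \<in> P" "q \<in> P" "le q p" "q \<noteq> p"
  shows "rank P le q < rank P le p"
proof -
  obtain c where c: "\<forall>i\<le>rank P le q. c i \<in> P"
      "\<forall>i<rank P le q. le (c i) (c (Suc i)) \<and> c i \<noteq> c (Suc i)" "c (rank P le q) = q"
    using chain_to_rank[OF po \<open>q \<in> P\<close>] unfolding chain_to_def by blast
  have "chain_to P le p (Suc (rank P le q))"
    unfolding chain_to_def using c assms(2-5)
    by (intro exI[of _ "c(Suc (rank P le q) := p)"]) (auto simp: less_Suc_eq le_Suc_eq)
  then show ?thesis using chain_to_le_rank[OF po] by fastforce
qed

lemma rank_Suc_obtain_lower:
  assumes po: "poset_on P le" and "p \<in> P" and "rank P le p = Suc k"
  obtains q where "q \<in> P" "le q p" "q \<noteq> p" "rank P le q = k"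
proof -
  obtain c where c: "\<forall>i\<le>Suc k. c i \<in> P" "\<forall>i<Suc k. le (c i) (c (Suc i)) \<and> c i \<noteq> c (Suc i)"
      "c (Suc k) = p"
    using chain_to_rank[OF po \<open>p \<in> P\<close>] \<open>rank P le p = Suc k\<close> unfolding chain_to_def by auto
  have below: "c k \<in> P" "le (c k) p" "c k \<noteq> p" using c by auto
  have "chain_to P le (c k) k" unfolding chain_to_def using c by (intro exI[of _ c]) auto
  then have "k \<le> rank P le (c k)" by (rule chain_to_le_rank[OF po])
  moreover have "rank P le (c k) < rank P le p" using rank_less[OF po \<open>p \<in> P\<close> below] .
  ultimately show thesis using that below \<open>rank P le p = Suc k\<close> by simp
qed

lemma rank_obtain_lower:
  assumes po: "poset_on P le" and "p \<in> P" and "k \<le> rank P le p"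
  obtains q where "q \<in> P" "le q p" "rank P le q = k"
proof -
  have descend: "\<exists>q\<in>P. le q p \<and> rank P le q = k" if "p \<in> P" "rank P le p = k + j" for j p
    using that
  proof (induction j arbitrary: p)
    case 0
    then show ?case using poset_on_refl[OF po] by auto
  next
    case (Suc j)
    obtain q where q: "q \<in> P" "le q p" "rank P le q = k + j"
      using rank_Suc_obtain_lower[OF po Suc.prems(1)] Suc.prems(2) by auto
    obtain r where r: "r \<in> P" "le r q" "rank P le r = k" using Suc.IH[OF q(1,3)] by blast
    have "le r p" using poset_on_trans[OF po r(1) q(1) Suc.prems(1) r(2) q(2)] .
    then show ?case using r by blast
  qed
  obtain j where "rank P le p = k + j" using assms(3) le_Suc_ex by blast
  then show thesis using descend[OF \<open>p \<in> P\<close>] that by blast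
qed

lemma rank_eq_0_if_minimal:
  assumes "p \<in> P" and min: "\<forall>q\<in>P. le q p \<longrightarrow> q = p"
  shows "rank P le p = 0"
proof -
  have "m = 0" if "chain_to P le p m" for m
  proof (rule ccontr)
    assume "m \<noteq> 0"
    then obtain m' where "m = Suc m'" using not0_implies_Suc by blast
    moreover obtain c where "\<forall>i\<le>m. c i \<in> P"
        "\<forall>i<m. le (c i) (c (Suc i)) \<and> c i \<noteq> c (Suc i)" "c m = p"
      using \<open>chain_to P le p m\<close> unfolding chain_to_def by blast
    ultimately show False using min by auto
  qed
  then show ?thesis
    unfolding rank_def using chain_to_0[OF \<open>p \<in> P\<close>] by (metis (mono_tags) Greatest_equality le0)
qed

lemma crown6_two_below:
  assumes "crown6_le a b" "a \<noteq> b"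
  shows "2 \<le> card {c \<in> {0, 1, 2}. crown6_le c b}"
proof -
  have "b = 3 \<or> b = 4 \<or> b = 5" using assms unfolding crown6_le_def by auto
  then have "{c \<in> {0, 1, 2}. crown6_le c b} = {0, 1} \<or> {c \<in> {0, 1, 2}. crown6_le c b} = {1, 2}
      \<or> {c \<in> {0, 1, 2}. crown6_le c b} = {0, 2}"
    by (elim disjE) (simp_all add: crown6_le_def, auto)
  then show ?thesis by (elim disjE) simp_all
qed

lemma order_iso_crown6_two_below:
  assumes "order_iso L le crown6 crown6_le"
  obtains X where "X \<subseteq> L" "card X = 3"
    "\<And>q y. q \<in> L \<Longrightarrow> y \<in> L \<Longrightarrow> le q y \<Longrightarrow> q \<noteq> y \<Longrightarrow> 2 \<le> card {x \<in> X. le x y}"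
proof -
  obtain g where g: "bij_betw g L crown6" "\<forall>x\<in>L. \<forall>y\<in>L. le x y \<longleftrightarrow> crown6_le (g x) (g y)"
    using assms unfolding order_iso_def by blast
  define h where "h = inv_into L g"
  have h: "bij_betw h crown6 L" unfolding h_def using g(1) by (rule bij_betw_inv_into)
  have g_h: "g (h c) = c" if "c \<in> crown6" for c
    unfolding h_def using g(1) that by (rule bij_betw_inv_into_right)
  have bottom: "{0, 1, 2} \<subseteq> crown6" unfolding crown6_def by auto
  have inj: "inj_on h {0, 1, 2}" using bij_betw_imp_inj_on[OF h] bottom by (rule inj_on_subset)
  have h_L: "h c \<in> L" if "c \<in> {0, 1, 2}" for c
    using bij_betwE[OF h] bottom that by blast
  have "card {x \<in> h ` {0, 1, 2}. le x y} \<ge> 2"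
    if "q \<in> L" "y \<in> L" "le q y" "q \<noteq> y" for q y
  proof -
    have "crown6_le (g q) (g y)" "g q \<noteq> g y"
      using g that unfolding bij_betw_def inj_on_def by auto
    then have "2 \<le> card {c \<in> {0, 1, 2}. crown6_le c (g y)}" by (rule crown6_two_below)
    also have "\<dots> = card (h ` {c \<in> {0, 1, 2}. crown6_le c (g y)})"
      by (rule card_image[symmetric], rule inj_on_subset[OF inj]) blast
    also have "h ` {c \<in> {0, 1, 2}. crown6_le c (g y)} = {x \<in> h ` {0, 1, 2}. le x y}"
    proof -
      have "le (h c) y \<longleftrightarrow> crown6_le c (g y)" if "c \<in> {0, 1, 2}" for c
        using g(2) h_L[OF that] \<open>y \<in> L\<close> g_h that bottom by auto
      then show ?thesis by blast
    qed
    finally show ?thesis .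
  qed
  moreover have "h ` {0, 1, 2} \<subseteq> L" using h_L by blast
  moreover have "card (h ` {0, 1, 2}) = 3" using inj by (simp add: card_image)
  ultimately show thesis using that by blast
qed

lemma six_stack_two_below:
  assumes "six_stack P le"
  obtains X where "X \<subseteq> P" "card X = 3"
    "\<And>z. z \<in> P \<Longrightarrow> rank P le z \<noteq> 0 \<Longrightarrow> 2 \<le> card {x \<in> X. le x z}"
proof -
  have po: "poset_on P le" using assms unfolding six_stack_def by blast
  have "order_iso (levels P le 0 1) le crown6 crown6_le"
    using assms unfolding six_stack_def by auto
  then obtain X where X: "X \<subseteq> levels P le 0 1" "card X = 3"
    and two_below: "\<And>q y. q \<in> levels P le 0 1 \<Longrightarrow> y \<in> levels P le 0 1 \<Longrightarrow> le q y \<Longrightarrow> q \<noteq> y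
      \<Longrightarrow> 2 \<le> card {x \<in> X. le x y}"
    by (rule order_iso_crown6_two_below) blast
  have "2 \<le> card {x \<in> X. le x z}" if "z \<in> P" "rank P le z \<noteq> 0" for z
  proof -
    have "1 \<le> rank P le z" using that(2) by simp
    then obtain y where y: "y \<in> P" "le y z" "rank P le y = 1"
      using rank_obtain_lower[OF po \<open>z \<in> P\<close>] by blast
    obtain q where q: "q \<in> P" "le q y" "q \<noteq> y" "rank P le q = 0"
      using rank_Suc_obtain_lower[OF po \<open>y \<in> P\<close>] y(3) by auto
    have "2 \<le> card {x \<in> X. le x y}"
      using two_below[of q y] y q unfolding levels_def by auto
    also have "\<dots> \<le> card {x \<in> X. le x z}"
    proof (rule card_mono)
      show "finite {x \<in> X. le x z}" using X(2) card_ge_0_finite by force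
      have "X \<subseteq> P" using X(1) unfolding levels_def by blast
      then show "{x \<in> X. le x y} \<subseteq> {x \<in> X. le x z}"
        using poset_on_trans[OF po _ y(1) \<open>z \<in> P\<close> _ y(2)] by blast
    qed
    finally show ?thesis .
  qed
  moreover have "X \<subseteq> P" using X(1) unfolding levels_def by blast
  ultimately show thesis using that X(2) by blast
qed

lemma retraction_card_below_minimal_le:
  assumes "Q \<subseteq> P" and "\<forall>p\<in>P. f p \<in> Q"
    and "\<forall>p\<in>P. \<forall>p'\<in>P. le p p' \<longrightarrow> le (f p) (f p')" and "\<forall>q\<in>Q. f q = q"
    and "z \<in> Q" and "\<forall>q\<in>Q. le q z \<longrightarrow> q = z"
    and "X \<subseteq> P" and "finite X"
  shows "card {x \<in> X. le x z} \<le> card {x \<in> X. f x = z}"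
proof (rule card_mono)
  show "finite {x \<in> X. f x = z}" using \<open>finite X\<close> by simp
  have "f x = z" if "x \<in> P" "le x z" for x
    using assms(1-6) that by (metis subsetD)
  then show "{x \<in> X. le x z} \<subseteq> {x \<in> X. f x = z}" using \<open>X \<subseteq> P\<close> by blast
qed

lemma four_tower_obtain_minimal:
  assumes "four_tower Q le"
  obtains a b where "a \<noteq> b" "a \<in> Q" "b \<in> Q"
    "\<forall>q\<in>Q. le q a \<longrightarrow> q = a" "\<forall>q\<in>Q. le q b \<longrightarrow> q = b"
proof -
  obtain k :: nat and A where k: "k \<ge> 1" and card_A: "\<forall>i<k. card (A i) = 2" and Q: "Q = (\<Union>i<k. A i)"
    and le_A: "\<forall>i<k. \<forall>j<k. \<forall>p\<in>A i. \<forall>q\<in>A j. le p q \<longleftrightarrow> (p = q \<or> i < j)"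
    using assms unfolding four_tower_def by blast
  obtain a b where ab: "A 0 = {a, b}" "a \<noteq> b"
    using card_A k unfolding card_2_iff by auto
  have "A 0 \<subseteq> Q" unfolding Q using k by (intro UN_upper) simp
  moreover have "\<forall>q\<in>Q. le q z \<longrightarrow> q = z" if "z \<in> A 0" for z
    using le_A k that unfolding Q by fastforce
  ultimately show thesis using that ab by auto
qed

lemma card_fibres_add_le:
  assumes "finite X" and "a \<noteq> b"
  shows "card {x \<in> X. f x = a} + card {x \<in> X. f x = b} \<le> card X"
proof -
  have "card {x \<in> X. f x = a} + card {x \<in> X. f x = b} = card ({x \<in> X. f x = a} \<union> {x \<in> X. f x = b})"
    using assms by (intro card_Un_disjoint[symmetric]) auto
  also have "\<dots> \<le> card X" using \<open>finite X\<close> by (intro card_mono) auto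
  finally show ?thesis .
qed

theorem lemma5p6:
  fixes P Q :: "'a set" and le :: "'a \<Rightarrow> 'a \<Rightarrow> bool"
  assumes "six_stack P le"
    and "retract P le Q"
    and "four_tower Q le"
  shows "level P le 0 \<inter> level Q le 0 \<noteq> {}"
proof
  assume disjoint_bottoms: "level P le 0 \<inter> level Q le 0 = {}"
  obtain X where X: "X \<subseteq> P" "card X = 3"
    and two_below: "\<And>z. z \<in> P \<Longrightarrow> rank P le z \<noteq> 0 \<Longrightarrow> 2 \<le> card {x \<in> X. le x z}"
    using assms(1) by (rule six_stack_two_below) blast
  obtain f where "Q \<subseteq> P" and f: "\<forall>p\<in>P. f p \<in> Q" "\<forall>p\<in>P. \<forall>p'\<in>P. le p p' \<longrightarrow> le (f p) (f p')"
      "\<forall>q\<in>Q. f q = q"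
    using assms(2) unfolding retract_def by blast
  obtain a b where "a \<noteq> b" and ab: "a \<in> Q" "b \<in> Q"
    and min: "\<forall>q\<in>Q. le q a \<longrightarrow> q = a" "\<forall>q\<in>Q. le q b \<longrightarrow> q = b"
    using assms(3) by (rule four_tower_obtain_minimal)
  have "finite X" using X(2) by (intro card_ge_0_finite) simp
  have fibre: "2 \<le> card {x \<in> X. f x = z}" if "z \<in> Q" "\<forall>q\<in>Q. le q z \<longrightarrow> q = z" for z
  proof -
    have "z \<in> P" using \<open>Q \<subseteq> P\<close> that(1) by blast
    have "rank Q le z = 0" using that by (rule rank_eq_0_if_minimal[where le = le])
    then have "z \<in> level Q le 0" using that(1) unfolding levels_def by simp
    then have "z \<notin> level P le 0" using disjoint_bottoms by blast
    then have "rank P le z \<noteq> 0" using \<open>z \<in> P\<close> unfolding levels_def by simp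
    then have "2 \<le> card {x \<in> X. le x z}" using two_below \<open>z \<in> P\<close> by blast
    also have "\<dots> \<le> card {x \<in> X. f x = z}"
      using retraction_card_below_minimal_le[OF \<open>Q \<subseteq> P\<close> f that X(1) \<open>finite X\<close>] .
    finally show ?thesis .
  qed
  show False
    using card_fibres_add_le[OF \<open>finite X\<close> \<open>a \<noteq> b\<close>, of f] X(2)
      fibre[OF ab(1) min(1)] fibre[OF ab(2) min(2)] by linarith
qed

end
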